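(* Let $\mathcal{M}=\langle M,\circ,e\rangle$ be an effective mge monoid with computable mge function $\eta$, let $\mathcal{T}$ be a monoidal finite-state transducer with output in $\mathcal{M}$, and let $\mathcal{A}^2$ be a (finitely given) squared output automaton for $\mathcal{T}$. Then a valuation $\langle\rho,\nu\rangle$ of $\mathcal{A}^2$ can be effectively computed.
   Context: An mge monoid is a monoid with right cancellation ($ac=bc\Rightarrow a=b$) in which every equalizable pair has a most general equalizer; here a tuple $\langle m_1,\dots,m_n\rangle$ is equalizable if some $\langle x_1,\dots,x_n\rangle$ (an equalizer) satisfies $m_1x_1=\dots=m_nx_n$, and an equalizer is most general (an mge) if every equalizer has the form $\langle x_1x,\dots,x_nx\rangle$ for some $x\in M$. It is effective if elements are represented as a recursive subset of $\mathbb{N}$ with computable operation, equality is decidable, equalizability of pairs is decidable, a computable $\eta:M^2\to M^2$ returns an mge for every equalizable pair, and inverses of invertible elements are computable. A transducer $\mathcal{T}=\langle\Sigma^*\times\mathcal{M},Q,I,F,\Delta\rangle$ has finite $\Delta\subseteq Q\times((\Sigma\cup\{\varepsilon\})\times M)\times Q$; $\Delta^*$ denotes generalized transitions (labels of paths, products of transition labels, including empty paths labelled by the unit). A squared output automaton for $\mathcal{T}$ is a monoidal automaton $\mathcal{A}^2=\langle\mathcal{M}\times\mathcal{M},Q\times Q,I\times I,F\times F,\Delta_2\rangle$ with finite $\Delta_2$ such that $\langle\langle p_1,p_2\rangle,\langle m,n\rangle,\langle q_1,q_2\rangle\rangle\in\Delta_2^*$ iff $\exists u\in\Sigma^*$ with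 $\langle p_1,\langle u,m\rangle,q_1\rangle,\langle p_2,\langle u,n\rangle,q_2\rangle\in\Delta^*$. A pair $\langle m_1,m_2\rangle$ is a relevant pair for a state $\langle q_1,q_2\rangle$ of $\mathcal{A}^2$ if $\langle q_1,q_2\rangle$ lies on a successful path of $\mathcal{A}^2$ (a path from $I\times I$ to $F\times F$) and $\langle\langle i_1,i_2\rangle,\langle m_1,m_2\rangle,\langle q_1,q_2\rangle\rangle\in\Delta_2^*$ for some $\langle i_1,i_2\rangle\in I\times I$. A valuation is a pair of partial functions $\rho,\nu:Q^2\to M^2$ such that: $\rho(q)$ is defined iff $q$ has a relevant pair; if defined, $\rho(q)=\langle e,e\rangle$ when $q\in I^2$ and otherwise $\rho(q)$ is some relevant pair of $q$; $\nu(q)=\langle e,e\rangle$ if $\rho(q)=\langle m,m\rangle$ for some $m$; otherwise $\nu(q)=\eta(\rho(q))$ if $\rho(q)$ is defined and equalizable, and $\nu(q)$ is undefined otherwise. *)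

theory Defs
  imports Main "HOL-Library.Nat_Bijection"
begin

datatype recf = RZero | RSuc | RProj nat | RComp recf "recf list" | RPrim recf recf | RMin recf

inductive eval_recf :: "recf \<Rightarrow> nat list \<Rightarrow> nat \<Rightarrow> bool" where
  "eval_recf RZero xs 0"
| "eval_recf RSuc (x # xs) (Suc x)"
| "i < length xs \<Longrightarrow> eval_recf (RProj i) xs (xs ! i)"
| "list_all2 (\<lambda>g y. eval_recf g xs y) gs ys \<Longrightarrow> eval_recf h ys z \<Longrightarrow> eval_recf (RComp h gs) xs z"
| "eval_recf g xs y \<Longrightarrow> eval_recf (RPrim g h) (0 # xs) y"
| "eval_recf (RPrim g h) (n # xs) y \<Longrightarrow> eval_recf h (y # n # xs) z
     \<Longrightarrow> eval_recf (RPrim g h) (Suc n # xs) z"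
| "eval_recf h (n # xs) 0 \<Longrightarrow> (\<forall>m<n. \<exists>y. y \<noteq> 0 \<and> eval_recf h (m # xs) y)
     \<Longrightarrow> eval_recf (RMin h) xs n"

definition computes_on :: "recf \<Rightarrow> nat set \<Rightarrow> (nat \<Rightarrow> nat) \<Rightarrow> bool" where
  "computes_on r D g \<longleftrightarrow> (\<forall>x\<in>D. eval_recf r [x] (g x))"

definition pairs_code :: "nat set \<Rightarrow> nat set" where
  "pairs_code M = prod_encode ` (M \<times> M)"

definition monoid_on :: "nat set \<Rightarrow> (nat \<Rightarrow> nat \<Rightarrow> nat) \<Rightarrow> nat \<Rightarrow> bool" where
  "monoid_on M f e \<longleftrightarrow> e \<in> M \<and> (\<forall>a\<in>M. \<forall>b\<in>M. f a b \<in> M)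
     \<and> (\<forall>a\<in>M. \<forall>b\<in>M. \<forall>c\<in>M. f (f a b) c = f a (f b c))
     \<and> (\<forall>a\<in>M. f e a = a \<and> f a e = a)"

definition right_cancellative :: "nat set \<Rightarrow> (nat \<Rightarrow> nat \<Rightarrow> nat) \<Rightarrow> bool" where
  "right_cancellative M f \<longleftrightarrow> (\<forall>a\<in>M. \<forall>b\<in>M. \<forall>c\<in>M. f a c = f b c \<longrightarrow> a = b)"

definition equalizable :: "nat set \<Rightarrow> (nat \<Rightarrow> nat \<Rightarrow> nat) \<Rightarrow> nat \<Rightarrow> nat \<Rightarrow> bool" where
  "equalizable M f m1 m2 \<longleftrightarrow> (\<exists>x1\<in>M. \<exists>x2\<in>M. f m1 x1 = f m2 x2)"

definition is_mge :: "nat set \<Rightarrow> (nat \<Rightarrow> nat \<Rightarrow> nat) \<Rightarrow> nat \<Rightarrow> nat \<Rightarrow> nat \<times> nat \<Rightarrow> bool" where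
  "is_mge M f m1 m2 p \<longleftrightarrow> fst p \<in> M \<and> snd p \<in> M \<and> f m1 (fst p) = f m2 (snd p)
     \<and> (\<forall>y1\<in>M. \<forall>y2\<in>M. f m1 y1 = f m2 y2 \<longrightarrow>
          (\<exists>x\<in>M. y1 = f (fst p) x \<and> y2 = f (snd p) x))"

definition mge_monoid :: "nat set \<Rightarrow> (nat \<Rightarrow> nat \<Rightarrow> nat) \<Rightarrow> nat \<Rightarrow> bool" where
  "mge_monoid M f e \<longleftrightarrow> monoid_on M f e \<and> right_cancellative M f
     \<and> (\<forall>a\<in>M. \<forall>b\<in>M. equalizable M f a b \<longrightarrow> (\<exists>p. is_mge M f a b p))"

definition invertible :: "nat set \<Rightarrow> (nat \<Rightarrow> nat \<Rightarrow> nat) \<Rightarrow> nat \<Rightarrow> nat \<Rightarrow> bool" where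
  "invertible M f e a \<longleftrightarrow> (\<exists>b\<in>M. f a b = e \<and> f b a = e)"

definition effective_mge_monoid ::
  "nat set \<Rightarrow> (nat \<Rightarrow> nat \<Rightarrow> nat) \<Rightarrow> nat \<Rightarrow> (nat \<times> nat \<Rightarrow> nat \<times> nat) \<Rightarrow> bool" where
  "effective_mge_monoid M f e \<eta> \<longleftrightarrow> mge_monoid M f e
     \<and> (\<exists>r. computes_on r UNIV (\<lambda>x. if x \<in> M then 1 else 0))
     \<and> (\<exists>r. computes_on r (pairs_code M) (\<lambda>x. f (fst (prod_decode x)) (snd (prod_decode x))))
     \<and> (\<exists>r. computes_on r (pairs_code M)
            (\<lambda>x. if fst (prod_decode x) = snd (prod_decode x) then 1 else 0))
     \<and> (\<exists>r. computes_on r (pairs_code M)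
            (\<lambda>x. if equalizable M f (fst (prod_decode x)) (snd (prod_decode x)) then 1 else 0))
     \<and> (\<forall>a\<in>M. \<forall>b\<in>M. \<eta> (a, b) \<in> M \<times> M)
     \<and> (\<forall>a\<in>M. \<forall>b\<in>M. equalizable M f a b \<longrightarrow> is_mge M f a b (\<eta> (a, b)))
     \<and> (\<exists>r. computes_on r (pairs_code M) (\<lambda>x. prod_encode (\<eta> (prod_decode x))))
     \<and> (\<exists>inv. (\<forall>a\<in>M. invertible M f e a \<longrightarrow> inv a \<in> M \<and> f a (inv a) = e \<and> f (inv a) a = e)
            \<and> (\<exists>r. computes_on r {a\<in>M. invertible M f e a} inv))"

inductive_set gen_trans :: "('q \<times> 'l \<times> 'q) set \<Rightarrow> ('l \<Rightarrow> 'l \<Rightarrow> 'l) \<Rightarrow> 'l \<Rightarrow> ('q \<times> 'l \<times> 'q) set"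
  for \<Delta> :: "('q \<times> 'l \<times> 'q) set" and mult :: "'l \<Rightarrow> 'l \<Rightarrow> 'l" and one :: 'l where
  refl: "(q, one, q) \<in> gen_trans \<Delta> mult one"
| step: "(p, x, q) \<in> gen_trans \<Delta> mult one \<Longrightarrow> (q, y, r) \<in> \<Delta> \<Longrightarrow> (p, mult x y, r) \<in> gen_trans \<Delta> mult one"

text \<open>Transducer transitions: (p, (a, m), q) with a = None for epsilon, Some c for letter c.\<close>
definition transducer ::
  "nat set \<Rightarrow> nat set \<Rightarrow> nat set \<Rightarrow> nat set \<Rightarrow> nat set \<Rightarrow> (nat \<times> (nat option \<times> nat) \<times> nat) set \<Rightarrow> bool" where
  "transducer M Sig Q I F \<Delta> \<longleftrightarrow> finite Sig \<and> finite Q \<and> I \<subseteq> Q \<and> F \<subseteq> Q \<and> finite \<Delta>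
     \<and> \<Delta> \<subseteq> Q \<times> ((Some ` Sig \<union> {None}) \<times> M) \<times> Q"

definition T_star :: "(nat \<Rightarrow> nat \<Rightarrow> nat) \<Rightarrow> nat \<Rightarrow> (nat \<times> (nat option \<times> nat) \<times> nat) set
    \<Rightarrow> (nat \<times> (nat list \<times> nat) \<times> nat) set" where
  "T_star f e \<Delta> = gen_trans
     ((\<lambda>(p, (a, m), q). (p, ((case a of None \<Rightarrow> [] | Some c \<Rightarrow> [c]), m), q)) ` \<Delta>)
     (\<lambda>(u, m) (v, n). (u @ v, f m n)) ([], e)"

definition A2_star :: "(nat \<Rightarrow> nat \<Rightarrow> nat) \<Rightarrow> nat \<Rightarrow> ((nat \<times> nat) \<times> (nat \<times> nat) \<times> (nat \<times> nat)) set
    \<Rightarrow> ((nat \<times> nat) \<times> (nat \<times> nat) \<times> (nat \<times> nat)) set" where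
  "A2_star f e \<Delta>2 = gen_trans \<Delta>2 (\<lambda>(m1, m2) (n1, n2). (f m1 n1, f m2 n2)) (e, e)"

definition squared_output_automaton ::
  "nat set \<Rightarrow> (nat \<Rightarrow> nat \<Rightarrow> nat) \<Rightarrow> nat \<Rightarrow> nat set \<Rightarrow> nat set \<Rightarrow> nat set \<Rightarrow> nat set
    \<Rightarrow> (nat \<times> (nat option \<times> nat) \<times> nat) set
    \<Rightarrow> ((nat \<times> nat) \<times> (nat \<times> nat) \<times> (nat \<times> nat)) set \<Rightarrow> bool" where
  "squared_output_automaton M f e Sig Q I F \<Delta> \<Delta>2 \<longleftrightarrow> finite \<Delta>2
     \<and> \<Delta>2 \<subseteq> (Q \<times> Q) \<times> (M \<times> M) \<times> (Q \<times> Q)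
     \<and> (\<forall>p1\<in>Q. \<forall>p2\<in>Q. \<forall>q1\<in>Q. \<forall>q2\<in>Q. \<forall>m n.
          ((p1, p2), (m, n), (q1, q2)) \<in> A2_star f e \<Delta>2 \<longleftrightarrow>
          (\<exists>u. (p1, (u, m), q1) \<in> T_star f e \<Delta> \<and> (p2, (u, n), q2) \<in> T_star f e \<Delta>))"

definition relevant_pair :: "(nat \<Rightarrow> nat \<Rightarrow> nat) \<Rightarrow> nat \<Rightarrow> nat set \<Rightarrow> nat set
    \<Rightarrow> ((nat \<times> nat) \<times> (nat \<times> nat) \<times> (nat \<times> nat)) set \<Rightarrow> nat \<times> nat \<Rightarrow> nat \<times> nat \<Rightarrow> bool" where
  "relevant_pair f e I F \<Delta>2 q mp \<longleftrightarrow>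
     (\<exists>i\<in>I \<times> I. \<exists>g\<in>F \<times> F. \<exists>x y. (i, x, q) \<in> A2_star f e \<Delta>2 \<and> (q, y, g) \<in> A2_star f e \<Delta>2)
     \<and> (\<exists>i\<in>I \<times> I. (i, mp, q) \<in> A2_star f e \<Delta>2)"

definition valuation :: "nat set \<Rightarrow> (nat \<Rightarrow> nat \<Rightarrow> nat) \<Rightarrow> nat \<Rightarrow> (nat \<times> nat \<Rightarrow> nat \<times> nat)
    \<Rightarrow> nat set \<Rightarrow> nat set \<Rightarrow> nat set \<Rightarrow> ((nat \<times> nat) \<times> (nat \<times> nat) \<times> (nat \<times> nat)) set
    \<Rightarrow> (nat \<times> nat \<Rightarrow> (nat \<times> nat) option) \<Rightarrow> (nat \<times> nat \<Rightarrow> (nat \<times> nat) option) \<Rightarrow> bool" where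
  "valuation M f e \<eta> Q I F \<Delta>2 \<rho> \<nu> \<longleftrightarrow> (\<forall>q\<in>Q \<times> Q.
     (\<rho> q \<noteq> None \<longleftrightarrow> (\<exists>mp. relevant_pair f e I F \<Delta>2 q mp))
     \<and> (\<forall>r. \<rho> q = Some r \<longrightarrow>
          (if q \<in> I \<times> I then r = (e, e) else relevant_pair f e I F \<Delta>2 q r))
     \<and> \<nu> q = (case \<rho> q of None \<Rightarrow> None
               | Some (a, b) \<Rightarrow> if a = b then Some (e, e)
                               else if equalizable M f a b then Some (\<eta> (a, b)) else None))"

definition enc_set :: "nat set \<Rightarrow> nat" where
  "enc_set S = list_encode (sorted_list_of_set S)"

definition enc_opt :: "nat option \<Rightarrow> nat" where
  "enc_opt x = (case x of None \<Rightarrow> 0 | Some n \<Rightarrow> Suc n)"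

definition enc_trans :: "nat \<times> (nat option \<times> nat) \<times> nat \<Rightarrow> nat" where
  "enc_trans t = (case t of (p, (a, m), q) \<Rightarrow> prod_encode (p, prod_encode (enc_opt a, prod_encode (m, q))))"

definition enc_trans2 :: "(nat \<times> nat) \<times> (nat \<times> nat) \<times> (nat \<times> nat) \<Rightarrow> nat" where
  "enc_trans2 t = (case t of (p, mn, q) \<Rightarrow> prod_encode (prod_encode p, prod_encode (prod_encode mn, prod_encode q)))"

definition input_code :: "nat set \<Rightarrow> nat set \<Rightarrow> nat set \<Rightarrow> nat set
    \<Rightarrow> (nat \<times> (nat option \<times> nat) \<times> nat) set
    \<Rightarrow> ((nat \<times> nat) \<times> (nat \<times> nat) \<times> (nat \<times> nat)) set \<Rightarrow> nat" where
  "input_code Sig Q I F \<Delta> \<Delta>2 = list_encode [enc_set Sig, enc_set Q, enc_set I, enc_set F,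
     enc_set (enc_trans ` \<Delta>), enc_set (enc_trans2 ` \<Delta>2)]"

definition output_code :: "nat set \<Rightarrow> (nat \<times> nat \<Rightarrow> (nat \<times> nat) option)
    \<Rightarrow> (nat \<times> nat \<Rightarrow> (nat \<times> nat) option) \<Rightarrow> nat" where
  "output_code Q \<rho> \<nu> = enc_set ((\<lambda>q. prod_encode (prod_encode q,
       prod_encode (enc_opt (map_option prod_encode (\<rho> q)), enc_opt (map_option prod_encode (\<nu> q)))))
     ` (Q \<times> Q))"

end

theory Submission
  imports Defs
begin

text \<open>A valuation is obtained by two saturation procedures on the squared output automaton.
  Forwards from \<open>I \<times> I\<close>, each newly reached state is recorded together with the label of
  the path that first reached it, computed with the computable multiplication of \<open>M\<close>; this
  label is a relevant pair whenever the state lies on a successful path, and it is \<open>(e, e)\<close>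
  on \<open>I \<times> I\<close>.  Backwards from \<open>F \<times> F\<close>, the states from which a final state is
  reachable are collected.  A round that changes a table adds a new state to it, so more than
  \<open>|Q|\<^sup>2\<close> rounds reach a fixpoint, and such a number of rounds can be read off the code of
  the input.  Then \<open>\<rho>\<close> is defined exactly on the states found by both procedures, and \<open>\<nu>\<close>
  is obtained from \<open>\<rho>\<close> using the decision procedures for equality and equalizability and
  the computable mge function \<open>\<eta>\<close>.  All of this is primitive recursive in the Cantor-coded
  input and the given programs.\<close>

section \<open>Primitive recursive programs\<close>

lemma eval_Proj: "i < length xs \<Longrightarrow> xs ! i = v \<Longrightarrow> eval_recf (RProj i) xs v"
  using eval_recf.intros(3) by blast

lemma eval_Comp1: "eval_recf g xs y \<Longrightarrow> eval_recf h [y] z \<Longrightarrow> eval_recf (RComp h [g]) xs z"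
  by (rule eval_recf.intros(4)[where ys="[y]"]) auto

lemma eval_Comp2: "eval_recf g1 xs y1 \<Longrightarrow> eval_recf g2 xs y2 \<Longrightarrow> eval_recf h [y1, y2] z
   \<Longrightarrow> eval_recf (RComp h [g1, g2]) xs z"
  by (rule eval_recf.intros(4)[where ys="[y1, y2]"]) auto

lemma eval_Comp3: "eval_recf g1 xs y1 \<Longrightarrow> eval_recf g2 xs y2 \<Longrightarrow> eval_recf g3 xs y3
   \<Longrightarrow> eval_recf h [y1, y2, y3] z \<Longrightarrow> eval_recf (RComp h [g1, g2, g3]) xs z"
  by (rule eval_recf.intros(4)[where ys="[y1, y2, y3]"]) auto

lemma eval_Zero: "eval_recf RZero xs 0"
  by (rule eval_recf.intros(1))

lemma eval_Suc: "eval_recf RSuc [x] (Suc x)"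
  by (rule eval_recf.intros(2))

lemma eval_SucI: "v = Suc x \<Longrightarrow> eval_recf RSuc [x] v"
  using eval_Suc by simp

lemma eval_Prim:
  assumes g: "eval_recf g xs G" and h: "\<And>y n. eval_recf h (y # n # xs) (H n y)"
  shows "eval_recf (RPrim g h) (n # xs) (rec_nat G H n)"
proof (induction n)
  case 0 then show ?case using g by (simp add: eval_recf.intros(5))
next
  case (Suc n) then show ?case using h by (simp add: eval_recf.intros(6))
qed

definition add_prog :: recf where
  "add_prog = RPrim (RProj 0) (RComp RSuc [RProj 0])"

lemma eval_add_prog: "eval_recf add_prog [a, b] (a + b)"
proof -
  have "eval_recf add_prog [a, b] (rec_nat b (\<lambda>n y. Suc y) a)"
    unfolding add_prog_def by (rule eval_Prim) (auto intro!: eval_Proj eval_Comp1 eval_SucI)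
  moreover have "rec_nat b (\<lambda>n y. Suc y) a = a + b" by (induct a) auto
  ultimately show ?thesis by simp
qed

lemma eval_add_progI: "v = a + b \<Longrightarrow> eval_recf add_prog [a, b] v"
  using eval_add_prog by simp

definition triangle_prog :: recf where
  "triangle_prog = RPrim RZero (RComp add_prog [RProj 0, RComp RSuc [RProj 1]])"

lemma eval_triangle_prog: "eval_recf triangle_prog [n] (triangle n)"
proof -
  have "eval_recf triangle_prog [n] (rec_nat 0 (\<lambda>n y. y + Suc n) n)"
    unfolding triangle_prog_def
    by (rule eval_Prim) (auto intro!: eval_Proj eval_Comp1 eval_Comp2 eval_SucI eval_Zero eval_add_progI)
  moreover have "rec_nat 0 (\<lambda>n y. y + Suc n) n = triangle n" by (induct n) auto
  ultimately show ?thesis by simp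
qed

lemma eval_triangle_progI: "v = triangle n \<Longrightarrow> eval_recf triangle_prog [n] v"
  using eval_triangle_prog by simp

definition pred_prog :: recf where
  "pred_prog = RPrim RZero (RProj 1)"

lemma eval_pred_prog: "eval_recf pred_prog [n] (n - 1)"
proof -
  have "eval_recf pred_prog [n] (rec_nat 0 (\<lambda>n y. n) n)"
    unfolding pred_prog_def by (rule eval_Prim) (auto intro!: eval_Proj eval_Zero)
  moreover have "rec_nat 0 (\<lambda>n y. n) n = n - 1" by (cases n) auto
  ultimately show ?thesis by simp
qed

lemma eval_pred_progI: "v = n - 1 \<Longrightarrow> eval_recf pred_prog [n] v"
  using eval_pred_prog by simp

definition diff_prog :: recf where
  "diff_prog = RComp (RPrim (RProj 0) (RComp pred_prog [RProj 0])) [RProj 1, RProj 0]"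

lemma eval_diff_prog: "eval_recf diff_prog [a, b] (a - b)"
proof -
  let ?rev = "RPrim (RProj 0) (RComp pred_prog [RProj 0])"
  have "eval_recf ?rev [b, a] (rec_nat a (\<lambda>n y. y - 1) b)"
    by (rule eval_Prim) (auto intro!: eval_Proj eval_Comp1 eval_pred_progI)
  moreover have "rec_nat a (\<lambda>n y. y - 1) b = a - b" by (induct b) auto
  ultimately have "eval_recf ?rev [b, a] (a - b)" by simp
  then show ?thesis unfolding diff_prog_def by (auto intro!: eval_Comp2 eval_Proj)
qed

lemma eval_diff_progI: "v = a - b \<Longrightarrow> eval_recf diff_prog [a, b] v"
  using eval_diff_prog by simp

definition if_zero_prog :: recf where
  "if_zero_prog = RPrim (RProj 0) (RProj 3)"

lemma eval_if_zero_prog: "eval_recf if_zero_prog [c, a, b] (if c = 0 then a else b)"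
proof -
  have "eval_recf if_zero_prog [c, a, b] (rec_nat a (\<lambda>n y. b) c)"
    unfolding if_zero_prog_def by (rule eval_Prim) (auto intro!: eval_Proj)
  moreover have "rec_nat a (\<lambda>n y. b) c = (if c = 0 then a else b)" by (cases c) auto
  ultimately show ?thesis by simp
qed

definition prod_encode_prog :: recf where
  "prod_encode_prog = RComp add_prog [RComp triangle_prog [RComp add_prog [RProj 0, RProj 1]], RProj 0]"

lemma eval_prod_encode_prog: "eval_recf prod_encode_prog [a, b] (prod_encode (a, b))"
  unfolding prod_encode_prog_def prod_encode_def
  by (auto intro!: eval_Comp1 eval_Comp2 eval_Proj eval_add_progI eval_triangle_progI)

definition le_prog :: recf where
  "le_prog = RComp diff_prog [RComp RSuc [RZero], RComp diff_prog [RProj 0, RProj 1]]"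

lemma eval_le_prog: "eval_recf le_prog [a, b] (if a \<le> b then 1 else 0)"
proof -
  have "eval_recf le_prog [a, b] (1 - (a - b))"
    unfolding le_prog_def by (auto intro!: eval_Comp1 eval_Comp2 eval_Proj eval_diff_progI eval_SucI eval_Zero)
  then show ?thesis by (cases "a \<le> b") auto
qed

definition triangles_below :: "nat \<Rightarrow> nat \<Rightarrow> nat" where
  "triangles_below z k = rec_nat 0 (\<lambda>n y. y + (if triangle (Suc n) \<le> z then 1 else 0)) k"

definition triangles_below_prog :: recf where
  "triangles_below_prog = RPrim RZero
     (RComp add_prog [RProj 0, RComp le_prog [RComp triangle_prog [RComp RSuc [RProj 1]], RProj 2]])"

lemma eval_triangles_below_prog: "eval_recf triangles_below_prog [k, z] (triangles_below z k)"
  unfolding triangles_below_prog_def triangles_below_def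
  by (rule eval_Prim)
    (auto intro!: eval_Comp1 eval_Comp2 eval_Proj eval_add_progI eval_triangle_progI eval_le_prog
      eval_Zero eval_SucI split del: if_split)

lemma triangle_mono: "i \<le> j \<Longrightarrow> triangle i \<le> triangle j"
  by (induct j) (auto simp: le_Suc_eq)

lemma le_triangle: "k \<le> triangle k"
  by (induct k) auto

lemma triangles_below_prod_decode:
  assumes "prod_decode z = (m, n)"
  shows "triangles_below z z = m + n"
proof -
  have z: "z = triangle (m + n) + m"
    using assms prod_decode_inverse[of z] by (simp add: prod_encode_def)
  have below_iff: "triangle j \<le> z \<longleftrightarrow> j \<le> m + n" for j
  proof
    assume "triangle j \<le> z"
    show "j \<le> m + n"
    proof (rule ccontr)
      assume "\<not> j \<le> m + n"
      then have "triangle (Suc (m + n)) \<le> triangle j" by (intro triangle_mono) auto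
      then show False using \<open>triangle j \<le> z\<close> z by simp
    qed
  next
    assume "j \<le> m + n"
    then show "triangle j \<le> z" using triangle_mono[OF \<open>j \<le> m + n\<close>] z by simp
  qed
  have "triangles_below z k = min k (m + n)" for k
  proof (induct k)
    case 0 show ?case by (simp add: triangles_below_def)
  next
    case (Suc k)
    have "triangles_below z (Suc k) = triangles_below z k + (if triangle (Suc k) \<le> z then 1 else 0)"
      by (simp add: triangles_below_def del: triangle_Suc)
    then show ?case using Suc by (simp add: below_iff del: triangle_Suc)
  qed
  moreover have "m + n \<le> z" using z le_triangle[of "m + n"] by simp
  ultimately show ?thesis by simp
qed

lemma prod_decode_eq_triangles_below:
  "prod_decode z = (z - triangle (triangles_below z z),
                    triangles_below z z - (z - triangle (triangles_below z z)))"
proof -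
  obtain m n where mn: "prod_decode z = (m, n)" by (cases "prod_decode z")
  have "z = triangle (m + n) + m" using mn prod_decode_inverse[of z] by (simp add: prod_encode_def)
  then show ?thesis using triangles_below_prod_decode[OF mn] mn by simp
qed

definition fst_decode_prog :: recf where
  "fst_decode_prog = RComp diff_prog
     [RProj 0, RComp triangle_prog [RComp triangles_below_prog [RProj 0, RProj 0]]]"

definition snd_decode_prog :: recf where
  "snd_decode_prog = RComp diff_prog
     [RComp triangles_below_prog [RProj 0, RProj 0], fst_decode_prog]"

lemma eval_fst_decode_prog': "eval_recf fst_decode_prog [z] (z - triangle (triangles_below z z))"
  unfolding fst_decode_prog_def
  by (auto intro!: eval_Comp1 eval_Comp2 eval_Proj eval_triangles_below_prog eval_triangle_prog
      eval_diff_prog)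

lemma eval_fst_decode_prog: "eval_recf fst_decode_prog [z] (fst (prod_decode z))"
  using eval_fst_decode_prog' by (subst prod_decode_eq_triangles_below) simp

lemma eval_snd_decode_prog: "eval_recf snd_decode_prog [z] (snd (prod_decode z))"
proof -
  have "eval_recf snd_decode_prog [z]
    (triangles_below z z - (z - triangle (triangles_below z z)))"
    unfolding snd_decode_prog_def
    by (auto intro!: eval_Comp2 eval_Proj eval_triangles_below_prog eval_fst_decode_prog'
        eval_diff_prog)
  then show ?thesis by (subst prod_decode_eq_triangles_below) simp
qed

definition computable :: "(nat \<Rightarrow> nat) \<Rightarrow> bool" where
  "computable g \<longleftrightarrow> (\<exists>r. computes_on r UNIV g)"

lemma computableI: "(\<And>x. eval_recf r [x] (g x)) \<Longrightarrow> computable g"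
  unfolding computable_def computes_on_def by blast

lemma computableE:
  assumes "computable g" obtains r where "\<And>x. eval_recf r [x] (g x)"
  using assms unfolding computable_def computes_on_def by blast

lemma computable_prog1:
  assumes p: "\<And>a. eval_recf p [a] (B a)" and F: "computable F"
  shows "computable (\<lambda>x. B (F x))"
proof -
  obtain rF where rF: "\<And>x. eval_recf rF [x] (F x)"
    using F unfolding computable_def computes_on_def by blast
  show ?thesis by (intro computableI[where r="RComp p [rF]"] eval_Comp1[OF rF p])
qed

lemma computable_prog2:
  assumes p: "\<And>a b. eval_recf p [a, b] (B a b)" and F: "computable F" and G: "computable G"
  shows "computable (\<lambda>x. B (F x) (G x))"
proof -
  obtain rF where rF: "\<And>x. eval_recf rF [x] (F x)"
    using F unfolding computable_def computes_on_def by blast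
  obtain rG where rG: "\<And>x. eval_recf rG [x] (G x)"
    using G unfolding computable_def computes_on_def by blast
  show ?thesis by (intro computableI[where r="RComp p [rF, rG]"] eval_Comp2[OF rF rG p])
qed

lemma computable_prog3:
  assumes p: "\<And>a b c. eval_recf p [a, b, c] (B a b c)"
    and F: "computable F" and G: "computable G" and H: "computable H"
  shows "computable (\<lambda>x. B (F x) (G x) (H x))"
proof -
  obtain rF where rF: "\<And>x. eval_recf rF [x] (F x)"
    using F unfolding computable_def computes_on_def by blast
  obtain rG where rG: "\<And>x. eval_recf rG [x] (G x)"
    using G unfolding computable_def computes_on_def by blast
  obtain rH where rH: "\<And>x. eval_recf rH [x] (H x)"
    using H unfolding computable_def computes_on_def by blast
  show ?thesis
    by (intro computableI[where r="RComp p [rF, rG, rH]"] eval_Comp3[OF rF rG rH p])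
qed

lemma computable_id: "computable (\<lambda>x. x)"
  by (rule computableI[where r="RProj 0"]) (rule eval_Proj, auto)

lemma computable_comp: "computable F \<Longrightarrow> computable G \<Longrightarrow> computable (\<lambda>x. F (G x))"
  by (erule computableE) (rule computable_prog1)

lemma computable_Suc: "computable F \<Longrightarrow> computable (\<lambda>x. Suc (F x))"
  by (rule computable_prog1[OF eval_Suc])

lemma computable_const: "computable (\<lambda>x. c)"
proof (induct c)
  case 0 show ?case by (rule computableI[where r=RZero]) (rule eval_Zero)
next
  case (Suc c) then show ?case by (rule computable_Suc)
qed

lemma computable_add: "computable F \<Longrightarrow> computable G \<Longrightarrow> computable (\<lambda>x. F x + G x)"
  by (rule computable_prog2[OF eval_add_prog])

lemma computable_diff: "computable F \<Longrightarrow> computable G \<Longrightarrow> computable (\<lambda>x. F x - G x)"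
  by (rule computable_prog2[OF eval_diff_prog])

lemma computable_prod_encode:
  "computable F \<Longrightarrow> computable G \<Longrightarrow> computable (\<lambda>x. prod_encode (F x, G x))"
  by (rule computable_prog2[OF eval_prod_encode_prog])

lemma computable_fst_decode: "computable F \<Longrightarrow> computable (\<lambda>x. fst (prod_decode (F x)))"
  by (rule computable_prog1[OF eval_fst_decode_prog])

lemma computable_snd_decode: "computable F \<Longrightarrow> computable (\<lambda>x. snd (prod_decode (F x)))"
  by (rule computable_prog1[OF eval_snd_decode_prog])

lemma computable_if_zero:
  "computable C \<Longrightarrow> computable A \<Longrightarrow> computable B \<Longrightarrow>
   computable (\<lambda>x. if C x = 0 then A x else B x)"
  by (rule computable_prog3[OF eval_if_zero_prog])

definition decidable :: "(nat \<Rightarrow> bool) \<Rightarrow> bool" where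
  "decidable P \<longleftrightarrow> computable (\<lambda>x. if P x then 1 else 0)"

lemma computable_if:
  assumes "decidable P" "computable A" "computable B"
  shows "computable (\<lambda>x. if P x then A x else B x)"
proof -
  have "computable (\<lambda>x. if (if P x then 1 else 0) = (0::nat) then B x else A x)"
    using assms unfolding decidable_def by (intro computable_if_zero)
  moreover have "(\<lambda>x. if (if P x then 1 else 0) = (0::nat) then B x else A x)
      = (\<lambda>x. if P x then A x else B x)" by auto
  ultimately show ?thesis by simp
qed

lemma decidable_eq: "computable F \<Longrightarrow> computable G \<Longrightarrow> decidable (\<lambda>x. F x = G x)"
proof -
  assume "computable F" "computable G"
  then have "computable (\<lambda>x. if (F x - G x) + (G x - F x) = 0 then 1 else 0)"
    by (intro computable_if_zero computable_add computable_diff computable_const)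
  moreover have "(F x - G x) + (G x - F x) = 0 \<longleftrightarrow> F x = G x" for x by auto
  ultimately show ?thesis unfolding decidable_def by simp
qed

lemma decidable_not: "decidable P \<Longrightarrow> decidable (\<lambda>x. \<not> P x)"
proof -
  assume "decidable P"
  then have "computable (\<lambda>x. if P x then 0 else 1)" by (intro computable_if computable_const)
  moreover have "(\<lambda>x. if P x then 0 else 1) = (\<lambda>x. if \<not> P x then 1 else (0::nat))" by auto
  ultimately show ?thesis unfolding decidable_def by simp
qed

lemma decidable_conj: "decidable P \<Longrightarrow> decidable Q \<Longrightarrow> decidable (\<lambda>x. P x \<and> Q x)"
proof -
  assume "decidable P" "decidable Q"
  then have "computable (\<lambda>x. if P x then (if Q x then 1 else 0) else 0)"
    by (intro computable_if computable_const)
  moreover have "(\<lambda>x. if P x then (if Q x then 1 else 0) else 0)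
      = (\<lambda>x. if P x \<and> Q x then 1 else (0::nat))" by auto
  ultimately show ?thesis unfolding decidable_def by simp
qed

abbreviation npair :: "nat \<Rightarrow> nat \<Rightarrow> nat" where "npair a b \<equiv> prod_encode (a, b)"
abbreviation nfst :: "nat \<Rightarrow> nat" where "nfst z \<equiv> fst (prod_decode z)"
abbreviation nsnd :: "nat \<Rightarrow> nat" where "nsnd z \<equiv> snd (prod_decode z)"

lemma computable_rec_nat:
  assumes A: "computable A" and N: "computable N"
    and H: "computable (\<lambda>z. H (nfst z) (nfst (nsnd z)) (nsnd (nsnd z)))"
  shows "computable (\<lambda>x. rec_nat (A x) (\<lambda>i y. H x i y) (N x))"
proof -
  obtain rA where rA: "\<And>x. eval_recf rA [x] (A x)"
    using A unfolding computable_def computes_on_def by blast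
  obtain rN where rN: "\<And>x. eval_recf rN [x] (N x)"
    using N unfolding computable_def computes_on_def by blast
  obtain rH where rH: "\<And>z. eval_recf rH [z] (H (nfst z) (nfst (nsnd z)) (nsnd (nsnd z)))"
    using H unfolding computable_def computes_on_def by blast
  define h where "h = RComp rH [RComp prod_encode_prog [RProj 2, RComp prod_encode_prog [RProj 1, RProj 0]]]"
  have h: "eval_recf h [y, n, x] (H x n y)" for y n x
  proof -
    have "eval_recf (RComp prod_encode_prog [RProj 2, RComp prod_encode_prog [RProj 1, RProj 0]])
      [y, n, x] (npair x (npair n y))"
      by (auto intro!: eval_Comp2 eval_Proj eval_prod_encode_prog)
    from eval_Comp1[OF this rH] show ?thesis unfolding h_def by simp
  qed
  have "eval_recf (RPrim rA h) [n, x] (rec_nat (A x) (\<lambda>i y. H x i y) n)" for n x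
    by (rule eval_Prim[OF rA h])
  then show ?thesis
    by (intro computableI[where r="RComp (RPrim rA h) [rN, RProj 0]"] eval_Comp2[OF rN] eval_Proj) auto
qed

lemma rec_nat_funpow: "rec_nat a (\<lambda>i y. g y) n = (g ^^ n) a"
  by (induct n) auto

lemma list_decode_Suc: "list_decode (Suc n) = nfst n # list_decode (nsnd n)"
  by (simp split: prod.split)

lemma length_list_decode_le: "length (list_decode c) \<le> c"
proof (induct c rule: list_decode.induct)
  case 1 then show ?case by simp
next
  case (2 n)
  obtain x y where xy: "prod_decode n = (x, y)" by (cases "prod_decode n")
  have "y \<le> n" using le_prod_encode_2[of y x] prod_decode_inverse[of n] xy by simp
  then show ?case using 2[OF xy[symmetric]] xy by simp
qed

lemma list_decode_less: "x \<in> set (list_decode c) \<Longrightarrow> x < c"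
proof (induct c rule: list_decode.induct)
  case 1 then show ?case by simp
next
  case (2 n)
  obtain a b where ab: "prod_decode n = (a, b)" by (cases "prod_decode n")
  have "a \<le> n" "b \<le> n"
    using le_prod_encode_1[of a b] le_prod_encode_2[of b a] prod_decode_inverse[of n] ab by simp_all
  then show ?case using 2 ab by (auto simp del: list_decode.simps simp: list_decode_Suc)
qed

text \<open>A fold over a coded list is run as an iteration on states (rest of list, accumulator),
  bounded by the code itself since a list is never longer than its code.\<close>

definition fold_step :: "(nat \<Rightarrow> nat \<Rightarrow> nat \<Rightarrow> nat) \<Rightarrow> nat \<Rightarrow> nat \<Rightarrow> nat" where
  "fold_step S x st = (if nfst st = 0 then st else
      npair (nsnd (nfst st - 1)) (S x (nfst (nfst st - 1)) (nsnd st)))"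

lemma fold_step_funpow:
  "length (list_decode c) \<le> n \<Longrightarrow>
   (fold_step S x ^^ n) (npair c a) = npair 0 (foldl (\<lambda>acc y. S x y acc) a (list_decode c))"
proof (induct n arbitrary: c a)
  case 0 then show ?case using list_decode_inverse[of c] by simp
next
  case (Suc n)
  show ?case
  proof (cases c)
    case 0
    have "(fold_step S x ^^ m) (npair 0 a) = npair 0 a" for m
      by (induct m) (auto simp: fold_step_def)
    then show ?thesis using 0 by (simp del: funpow.simps)
  next
    case (Suc c')
    have "(fold_step S x ^^ Suc n) (npair c a) = (fold_step S x ^^ n) (fold_step S x (npair c a))"
      by (simp add: funpow_Suc_right del: funpow.simps)
    also have "fold_step S x (npair c a) = npair (nsnd c') (S x (nfst c') a)"
      using Suc by (simp add: fold_step_def)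
    also have "(fold_step S x ^^ n) \<dots> = npair 0 (foldl (\<lambda>acc y. S x y acc) (S x (nfst c') a)
               (list_decode (nsnd c')))"
      using Suc.prems Suc by (intro Suc.hyps) (simp add: list_decode_Suc del: list_decode.simps)
    finally show ?thesis using Suc by (simp add: list_decode_Suc del: list_decode.simps)
  qed
qed

lemma computable_foldl:
  assumes S: "computable (\<lambda>z. S (nfst z) (nfst (nsnd z)) (nsnd (nsnd z)))"
    and A: "computable A" and C: "computable C"
  shows "computable (\<lambda>x. foldl (\<lambda>acc y. S x y acc) (A x) (list_decode (C x)))"
proof -
  let ?G = "\<lambda>z. npair (nfst z) (npair (nfst (nfst (nsnd (nsnd z)) - 1)) (nsnd (nsnd (nsnd z))))"
  have G: "computable ?G"
    by (intro computable_prod_encode computable_fst_decode computable_snd_decode computable_diff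
        computable_id computable_const)
  have S': "computable (\<lambda>z. S (nfst z) (nfst (nfst (nsnd (nsnd z)) - 1)) (nsnd (nsnd (nsnd z))))"
    using computable_comp[OF S G] by simp
  have "computable (\<lambda>x. nsnd (rec_nat (npair (C x) (A x)) (\<lambda>i st. fold_step S x st) (C x)))"
    unfolding fold_step_def
    by (intro computable_snd_decode computable_rec_nat computable_prod_encode A C computable_if
        decidable_eq computable_fst_decode computable_const computable_id computable_diff S')
  moreover have "nsnd (rec_nat (npair (C x) (A x)) (\<lambda>i st. fold_step S x st) (C x))
     = foldl (\<lambda>acc y. S x y acc) (A x) (list_decode (C x))" for x
    by (simp add: rec_nat_funpow fold_step_funpow length_list_decode_le)
  ultimately show ?thesis by simp
qed

lemma computable_split2:
  "computable (\<lambda>z. F (nfst z) (nsnd z)) \<Longrightarrow> computable A \<Longrightarrow> computable B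
   \<Longrightarrow> computable (\<lambda>x. F (A x) (B x))"
  using computable_comp[of "\<lambda>z. F (nfst z) (nsnd z)" "\<lambda>x. npair (A x) (B x)"]
    computable_prod_encode[of A B] by simp

lemma computable_split3:
  "computable (\<lambda>z. F (nfst z) (nfst (nsnd z)) (nsnd (nsnd z))) \<Longrightarrow>
   computable A \<Longrightarrow> computable B \<Longrightarrow> computable C \<Longrightarrow> computable (\<lambda>x. F (A x) (B x) (C x))"
  using computable_comp[of "\<lambda>z. F (nfst z) (nfst (nsnd z)) (nsnd (nsnd z))"
      "\<lambda>x. npair (A x) (npair (B x) (C x))"]
    computable_prod_encode[of B C] computable_prod_encode[of A "\<lambda>x. npair (B x) (C x)"]
  by simp

lemma computable_split4:
  "computable (\<lambda>z. F (nfst z) (nfst (nsnd z)) (nfst (nsnd (nsnd z))) (nsnd (nsnd (nsnd z)))) \<Longrightarrow>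
   computable A \<Longrightarrow> computable B \<Longrightarrow> computable C \<Longrightarrow> computable D \<Longrightarrow>
   computable (\<lambda>x. F (A x) (B x) (C x) (D x))"
  using computable_comp[of "\<lambda>z. F (nfst z) (nfst (nsnd z)) (nfst (nsnd (nsnd z))) (nsnd (nsnd (nsnd z)))"
      "\<lambda>x. npair (A x) (npair (B x) (npair (C x) (D x)))"]
    computable_prod_encode[of C D] computable_prod_encode[of B "\<lambda>x. npair (C x) (D x)"]
    computable_prod_encode[of A "\<lambda>x. npair (B x) (npair (C x) (D x))"]
  by simp

lemmas computable_intros = computable_id computable_const computable_Suc computable_add
  computable_diff computable_prod_encode computable_fst_decode computable_snd_decode computable_if
  decidable_eq decidable_not decidable_conj

definition cons_code :: "nat \<Rightarrow> nat \<Rightarrow> nat" where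
  "cons_code a c = Suc (npair a c)"

lemma list_decode_cons_code [simp]: "list_decode (cons_code a c) = a # list_decode c"
  by (simp add: cons_code_def)

lemma computable_cons_code:
  "computable A \<Longrightarrow> computable C \<Longrightarrow> computable (\<lambda>x. cons_code (A x) (C x))"
  unfolding cons_code_def by (intro computable_intros)

definition hd_code :: "nat \<Rightarrow> nat" where
  "hd_code c = nfst (c - 1)"

definition tl_code :: "nat \<Rightarrow> nat" where
  "tl_code c = nsnd (c - 1)"

lemma hd_code_list_encode [simp]: "hd_code (list_encode (x # xs)) = x"
  by (simp add: hd_code_def)

lemma tl_code_list_encode [simp]: "tl_code (list_encode (x # xs)) = list_encode xs"
  by (simp add: tl_code_def)

lemma computable_hd_code: "computable C \<Longrightarrow> computable (\<lambda>x. hd_code (C x))"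
  unfolding hd_code_def by (intro computable_intros)

lemma computable_tl_code: "computable C \<Longrightarrow> computable (\<lambda>x. tl_code (C x))"
  unfolding tl_code_def by (intro computable_intros)

text \<open>Association lists are coded lists of entries \<open>npair key value\<close>; a lookup returns
  \<open>0\<close> for a missing key and \<open>Suc value\<close> for the first entry with that key.\<close>

definition lookup_code :: "nat \<Rightarrow> nat \<Rightarrow> nat" where
  "lookup_code k R = foldl (\<lambda>acc y. if acc = 0 then (if nfst y = k then Suc (nsnd y) else 0) else acc)
     0 (list_decode R)"

definition keys_code :: "nat \<Rightarrow> nat set" where
  "keys_code R = nfst ` set (list_decode R)"

lemma computable_lookup_code:
  "computable K \<Longrightarrow> computable R \<Longrightarrow> computable (\<lambda>x. lookup_code (K x) (R x))"
proof -
  have "computable (\<lambda>z. lookup_code (nfst z) (nsnd z))"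
    unfolding lookup_code_def by (intro computable_foldl computable_intros)
  then show "computable K \<Longrightarrow> computable R \<Longrightarrow> computable (\<lambda>x. lookup_code (K x) (R x))"
    by (rule computable_split2)
qed

lemma lookup_code_find:
  "lookup_code k R = (case find (\<lambda>y. nfst y = k) (list_decode R) of None \<Rightarrow> 0 | Some y \<Rightarrow> Suc (nsnd y))"
proof -
  have fold: "foldl (\<lambda>acc y. if acc = 0 then (if nfst y = k then Suc (nsnd y) else 0) else acc) a xs
    = (if a = 0 then (case find (\<lambda>y. nfst y = k) xs of None \<Rightarrow> 0 | Some y \<Rightarrow> Suc (nsnd y)) else a)"
    for a xs by (induct xs arbitrary: a) auto
  show ?thesis unfolding lookup_code_def fold by simp
qed

lemma lookup_code_eq_0_iff: "lookup_code k R = 0 \<longleftrightarrow> k \<notin> keys_code R"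
  unfolding lookup_code_find keys_code_def
  by (auto split: option.split simp: find_None_iff simp: find_Some_iff)

lemma lookup_code_SucD:
  "lookup_code k R = Suc w \<Longrightarrow> \<exists>y\<in>set (list_decode R). nfst y = k \<and> nsnd y = w"
  unfolding lookup_code_find by (auto split: option.splits simp: find_Some_iff)

definition member_code :: "nat \<Rightarrow> nat \<Rightarrow> nat" where
  "member_code k L = foldl (\<lambda>acc y. if y = k then 1 else acc) 0 (list_decode L)"

lemma computable_member_code:
  "computable K \<Longrightarrow> computable L \<Longrightarrow> computable (\<lambda>x. member_code (K x) (L x))"
proof -
  have "computable (\<lambda>z. member_code (nfst z) (nsnd z))"
    unfolding member_code_def by (intro computable_foldl computable_intros)
  then show "computable K \<Longrightarrow> computable L \<Longrightarrow> computable (\<lambda>x. member_code (K x) (L x))"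
    by (rule computable_split2)
qed

lemma member_code_eq_0_iff: "member_code k L = 0 \<longleftrightarrow> k \<notin> set (list_decode L)"
proof -
  have fold: "foldl (\<lambda>acc y. if y = k then 1 else acc) a xs = (if k \<in> set xs then 1 else a)" for a xs
    by (induct xs arbitrary: a) auto
  show ?thesis unfolding member_code_def fold by simp
qed

text \<open>The elements of a coded list are below its code, so scanning the candidates
  \<open>0, \<dots>, L\<close> (from the top, consing) sorts and deduplicates it.\<close>

definition sort_code :: "nat \<Rightarrow> nat" where
  "sort_code L = rec_nat 0 (\<lambda>n S. if member_code (L - n) L = 0 then S else cons_code (L - n) S) (Suc L)"

lemma computable_sort_code: "computable L \<Longrightarrow> computable (\<lambda>x. sort_code (L x))"
proof -
  have "computable sort_code"
    unfolding sort_code_def by (intro computable_rec_nat computable_cons_code computable_member_code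
        computable_intros)
  then show "computable L \<Longrightarrow> computable (\<lambda>x. sort_code (L x))" by (rule computable_comp)
qed

lemma list_decode_sort_code_prefix:
  assumes "n \<le> Suc L"
  shows "list_decode (rec_nat 0 (\<lambda>n S. if member_code (L - n) L = 0 then S else cons_code (L - n) S) n)
       = filter (\<lambda>x. x \<in> set (list_decode L)) [Suc L - n..<Suc L]"
  using assms
proof (induct n)
  case 0 then show ?case by simp
next
  case (Suc n)
  have "Suc L - n = Suc (L - n)" using Suc.prems by simp
  moreover have "[L - n..<Suc L] = (L - n) # [Suc (L - n)..<Suc L]" by (rule upt_conv_Cons) simp
  ultimately show ?case using Suc by (simp add: member_code_eq_0_iff del: upt_Suc)
qed

lemma list_decode_sort_code: "list_decode (sort_code L) = sorted_list_of_set (set (list_decode L))"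
proof -
  let ?xs = "filter (\<lambda>x. x \<in> set (list_decode L)) [0..<Suc L]"
  have "list_decode (sort_code L) = ?xs"
    unfolding sort_code_def using list_decode_sort_code_prefix[of "Suc L" L] by simp
  also have "\<dots> = sorted_list_of_set (set (list_decode L))"
  proof (rule sorted_distinct_set_unique)
    show "sorted ?xs" by (rule sorted_wrt_filter) (simp del: upt_Suc)
    show "set ?xs = set (sorted_list_of_set (set (list_decode L)))"
      using list_decode_less[of _ L] by auto
  qed simp_all
  finally show ?thesis .
qed

definition square_table :: "nat \<Rightarrow> nat \<Rightarrow> nat" where
  "square_table V v = foldl (\<lambda>acc a. foldl (\<lambda>acc' b. cons_code (npair (npair a b) v) acc') acc
     (list_decode V)) 0 (list_decode V)"

lemma computable_square_table:
  "computable V \<Longrightarrow> computable W \<Longrightarrow> computable (\<lambda>x. square_table (V x) (W x))"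
proof -
  have "computable (\<lambda>z. square_table (nfst z) (nsnd z))"
    unfolding square_table_def by (intro computable_foldl computable_cons_code computable_intros)
  then show "computable V \<Longrightarrow> computable W \<Longrightarrow> computable (\<lambda>x. square_table (V x) (W x))"
    by (rule computable_split2)
qed

lemma set_foldl_foldl_cons_code:
  "set (list_decode (foldl (\<lambda>acc a. foldl (\<lambda>acc' b. cons_code (g a b) acc') acc bs) acc as))
   = {g a b | a b. a \<in> set as \<and> b \<in> set bs} \<union> set (list_decode acc)"
proof -
  have inner: "list_decode (foldl (\<lambda>acc b. cons_code (h b) acc) acc bs) = rev (map h bs) @ list_decode acc"
    for h acc by (induct bs arbitrary: acc) auto
  show ?thesis by (induct as arbitrary: acc) (auto simp: inner)
qed

lemma set_square_table:
  "set (list_decode (square_table V v))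
    = {npair (npair a b) v | a b. a \<in> set (list_decode V) \<and> b \<in> set (list_decode V)}"
  unfolding square_table_def by (subst set_foldl_foldl_cons_code) simp

section \<open>The saturation algorithm\<close>

text \<open>A transition \<open>(p, (m, n), q)\<close> of the
  squared automaton is coded as \<open>npair p' (npair mn' q')\<close>; direction \<open>0\<close> follows it
  forwards, direction \<open>1\<close> backwards.  A saturation table maps coded states to the
  coded label of a path found from the start states (forwards) or to a junk value (backwards).\<close>

definition edge_source :: "nat \<Rightarrow> nat \<Rightarrow> nat" where
  "edge_source d t = (if d = 0 then nfst t else nsnd (nsnd t))"

definition edge_target :: "nat \<Rightarrow> nat \<Rightarrow> nat" where
  "edge_target d t = (if d = 0 then nsnd (nsnd t) else nfst t)"

definition states_code :: "nat \<Rightarrow> nat" where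
  "states_code c = hd_code (tl_code c)"

definition initial_code :: "nat \<Rightarrow> nat" where
  "initial_code c = hd_code (tl_code (tl_code c))"

definition final_code :: "nat \<Rightarrow> nat" where
  "final_code c = hd_code (tl_code (tl_code (tl_code c)))"

definition squared_trans_code :: "nat \<Rightarrow> nat" where
  "squared_trans_code c = hd_code (tl_code (tl_code (tl_code (tl_code (tl_code c)))))"

text \<open>\<open>Suc (npair c c)\<close> exceeds \<open>c\<^sup>2\<close>, hence the number of pairs of states of an input
  with code \<open>c\<close>.\<close>

definition round_bound :: "nat \<Rightarrow> nat" where
  "round_bound c = Suc (npair c c)"

locale valuation_algorithm =
  fixes mult_code equalizable_code mge_code :: "nat \<Rightarrow> nat" and e :: nat
begin

definition mult_pair :: "nat \<Rightarrow> nat \<Rightarrow> nat" where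
  "mult_pair v l = npair (mult_code (npair (nfst v) (nfst l))) (mult_code (npair (nsnd v) (nsnd l)))"

definition extend_step :: "nat \<Rightarrow> nat \<Rightarrow> nat \<Rightarrow> nat" where
  "extend_step d t R =
     (if lookup_code (edge_source d t) R \<noteq> 0 \<and> lookup_code (edge_target d t) R = 0
      then cons_code (npair (edge_target d t) (mult_pair (lookup_code (edge_source d t) R - 1) (nfst (nsnd t)))) R
      else R)"

definition saturation_round :: "nat \<Rightarrow> nat \<Rightarrow> nat \<Rightarrow> nat" where
  "saturation_round d D2 R = foldl (\<lambda>acc t. extend_step d t acc) R (list_decode D2)"

definition saturate :: "nat \<Rightarrow> nat \<Rightarrow> nat \<Rightarrow> nat \<Rightarrow> nat" where
  "saturate d D2 R0 N = rec_nat R0 (\<lambda>i R. saturation_round d D2 R) N"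

definition forward_table :: "nat \<Rightarrow> nat" where
  "forward_table c = saturate 0 (squared_trans_code c) (square_table (initial_code c) (npair e e))
     (round_bound c)"

definition backward_table :: "nat \<Rightarrow> nat" where
  "backward_table c = saturate 1 (squared_trans_code c) (square_table (final_code c) 0) (round_bound c)"

definition rho_code :: "nat \<Rightarrow> nat \<Rightarrow> nat \<Rightarrow> nat" where
  "rho_code Rf Rb k = (if lookup_code k Rb = 0 then 0 else lookup_code k Rf)"

definition nu_code :: "nat \<Rightarrow> nat" where
  "nu_code v = (if v = 0 then 0 else if nfst (v - 1) = nsnd (v - 1) then Suc (npair e e)
     else if equalizable_code (v - 1) = 0 then 0 else Suc (mge_code (v - 1)))"

definition table_entry :: "nat \<Rightarrow> nat \<Rightarrow> nat \<Rightarrow> nat" where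
  "table_entry Rf Rb k = npair k (npair (rho_code Rf Rb k) (nu_code (rho_code Rf Rb k)))"

definition table_list :: "nat \<Rightarrow> nat \<Rightarrow> nat \<Rightarrow> nat" where
  "table_list Qc Rf Rb = foldl (\<lambda>acc a. foldl (\<lambda>acc' b. cons_code (table_entry Rf Rb (npair a b)) acc')
     acc (list_decode Qc)) 0 (list_decode Qc)"

definition valuation_program :: "nat \<Rightarrow> nat" where
  "valuation_program c = sort_code (table_list (states_code c) (forward_table c) (backward_table c))"

end

locale computable_valuation_algorithm = valuation_algorithm +
  assumes computable_mult_code: "computable mult_code"
    and computable_equalizable_code: "computable equalizable_code"
    and computable_mge_code: "computable mge_code"
begin

lemma computable_saturation_round:
  "computable D \<Longrightarrow> computable T \<Longrightarrow> computable R \<Longrightarrow>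
   computable (\<lambda>x. saturation_round (D x) (T x) (R x))"
proof -
  have mult_pair: "computable A \<Longrightarrow> computable B \<Longrightarrow> computable (\<lambda>x. mult_pair (A x) (B x))" for A B
    unfolding mult_pair_def by (intro computable_comp[OF computable_mult_code] computable_intros)
  have "computable (\<lambda>z. saturation_round (nfst z) (nfst (nsnd z)) (nsnd (nsnd z)))"
    unfolding saturation_round_def extend_step_def edge_source_def edge_target_def
    by (intro computable_foldl computable_cons_code mult_pair computable_lookup_code computable_intros)
  then show "computable D \<Longrightarrow> computable T \<Longrightarrow> computable R \<Longrightarrow>
      computable (\<lambda>x. saturation_round (D x) (T x) (R x))"
    by (rule computable_split3)
qed

lemma computable_saturate:
  "computable D \<Longrightarrow> computable T \<Longrightarrow> computable R \<Longrightarrow> computable N \<Longrightarrow>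
   computable (\<lambda>x. saturate (D x) (T x) (R x) (N x))"
proof -
  have "computable (\<lambda>z. saturate (nfst z) (nfst (nsnd z)) (nfst (nsnd (nsnd z))) (nsnd (nsnd (nsnd z))))"
    unfolding saturate_def by (intro computable_rec_nat computable_saturation_round computable_intros)
  then show "computable D \<Longrightarrow> computable T \<Longrightarrow> computable R \<Longrightarrow> computable N \<Longrightarrow>
      computable (\<lambda>x. saturate (D x) (T x) (R x) (N x))"
    by (rule computable_split4)
qed

lemma computable_table_list:
  "computable Q \<Longrightarrow> computable A \<Longrightarrow> computable B \<Longrightarrow> computable (\<lambda>x. table_list (Q x) (A x) (B x))"
proof -
  have "computable (\<lambda>z. table_list (nfst z) (nfst (nsnd z)) (nsnd (nsnd z)))"
    unfolding table_list_def table_entry_def rho_code_def nu_code_def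
    by (intro computable_foldl computable_cons_code computable_lookup_code
        computable_comp[OF computable_equalizable_code] computable_comp[OF computable_mge_code]
        computable_intros)
  then show "computable Q \<Longrightarrow> computable A \<Longrightarrow> computable B \<Longrightarrow>
      computable (\<lambda>x. table_list (Q x) (A x) (B x))"
    by (rule computable_split3)
qed

lemma computable_valuation_program: "computable valuation_program"
proof -
  have "computable (\<lambda>c. valuation_program c)"
    unfolding valuation_program_def forward_table_def backward_table_def round_bound_def
      states_code_def initial_code_def final_code_def squared_trans_code_def
    by (intro computable_sort_code computable_table_list computable_saturate computable_square_table
        computable_hd_code computable_tl_code computable_intros)
  then show ?thesis by simp
qed

end

section \<open>Saturation reaches a fixpoint\<close>

context valuation_algorithm
begin

lemma saturation_round_prepends:
  "\<exists>X. list_decode (foldl (\<lambda>acc t. extend_step d t acc) R ts) = X @ list_decode R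
     \<and> (\<forall>y\<in>set X. nfst y \<notin> keys_code R)
     \<and> (X = [] \<longrightarrow> (\<forall>t\<in>set ts. lookup_code (edge_source d t) R = 0 \<or> lookup_code (edge_target d t) R \<noteq> 0))"
proof (induct ts arbitrary: R)
  case Nil show ?case by simp
next
  case (Cons t ts)
  show ?case
  proof (cases "lookup_code (edge_source d t) R \<noteq> 0 \<and> lookup_code (edge_target d t) R = 0")
    case True
    let ?y = "npair (edge_target d t) (mult_pair (lookup_code (edge_source d t) R - 1) (nfst (nsnd t)))"
    have step: "extend_step d t R = cons_code ?y R" using True unfolding extend_step_def by simp
    obtain X where X: "list_decode (foldl (\<lambda>acc t. extend_step d t acc) (cons_code ?y R) ts)
        = X @ list_decode (cons_code ?y R)" "\<forall>y\<in>set X. nfst y \<notin> keys_code (cons_code ?y R)"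
      using Cons.hyps[of "cons_code ?y R"] by blast
    have "keys_code (cons_code ?y R) = insert (edge_target d t) (keys_code R)"
      by (simp add: keys_code_def)
    moreover have "edge_target d t \<notin> keys_code R" using True lookup_code_eq_0_iff by blast
    ultimately show ?thesis using X step by (intro exI[of _ "X @ [?y]"]) auto
  next
    case False
    then have "extend_step d t R = R" unfolding extend_step_def by auto
    then show ?thesis using Cons.hyps[of R] False by auto
  qed
qed

lemma find_append_skip: "\<forall>y\<in>set X. \<not> P y \<Longrightarrow> find P (X @ L) = find P L"
  by (induct X) auto

lemma lookup_saturation_round:
  assumes "lookup_code k R \<noteq> 0"
  shows "lookup_code k (saturation_round d D2 R) = lookup_code k R"
proof -
  obtain X where X: "list_decode (saturation_round d D2 R) = X @ list_decode R"
      "\<forall>y\<in>set X. nfst y \<notin> keys_code R"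
    using saturation_round_prepends[of d R "list_decode D2"] unfolding saturation_round_def by blast
  have "\<forall>y\<in>set X. nfst y \<noteq> k" using X(2) assms lookup_code_eq_0_iff by auto
  then show ?thesis unfolding lookup_code_find X(1) by (simp add: find_append_skip)
qed

lemma saturation_round_fixpoint_closed:
  assumes "saturation_round d D2 R = R" "t \<in> set (list_decode D2)" "lookup_code (edge_source d t) R \<noteq> 0"
  shows "lookup_code (edge_target d t) R \<noteq> 0"
proof -
  obtain X where "list_decode (saturation_round d D2 R) = X @ list_decode R"
      "X = [] \<longrightarrow> (\<forall>t\<in>set (list_decode D2).
         lookup_code (edge_source d t) R = 0 \<or> lookup_code (edge_target d t) R \<noteq> 0)"
    using saturation_round_prepends[of d R "list_decode D2"] unfolding saturation_round_def by blast
  then show ?thesis using assms by auto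
qed

lemma keys_saturation_round_psubset:
  assumes "saturation_round d D2 R \<noteq> R"
  shows "keys_code R \<subset> keys_code (saturation_round d D2 R)"
proof -
  obtain X where X: "list_decode (saturation_round d D2 R) = X @ list_decode R"
      "\<forall>y\<in>set X. nfst y \<notin> keys_code R"
    using saturation_round_prepends[of d R "list_decode D2"] unfolding saturation_round_def by blast
  have "X \<noteq> []" using X(1) assms list_decode_eq by force
  then obtain y where y: "y \<in> set X" by (cases X) auto
  have "nfst y \<in> keys_code (saturation_round d D2 R) - keys_code R"
    unfolding keys_code_def X(1) using y X(2) keys_code_def by auto
  moreover have "keys_code R \<subseteq> keys_code (saturation_round d D2 R)"
    unfolding keys_code_def X(1) by auto
  ultimately show ?thesis by blast
qed

lemma keys_saturation_round_subset:
  "keys_code (saturation_round d D2 R) \<subseteq> keys_code R \<union> edge_target d ` set (list_decode D2)"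
proof -
  have "keys_code (foldl (\<lambda>acc t. extend_step d t acc) R ts) \<subseteq> keys_code R \<union> edge_target d ` set ts"
    for ts
  proof (induct ts arbitrary: R)
    case (Cons t ts)
    have "keys_code (extend_step d t R) \<subseteq> insert (edge_target d t) (keys_code R)"
      unfolding extend_step_def by (auto simp: keys_code_def)
    then show ?case using Cons[of "extend_step d t R"] by auto
  qed simp
  then show ?thesis unfolding saturation_round_def .
qed

lemma saturation_round_invariant:
  assumes "\<forall>y\<in>set (list_decode R). Inv y"
    and "\<And>t w. t \<in> set (list_decode D2) \<Longrightarrow> Inv (npair (edge_source d t) w)
           \<Longrightarrow> Inv (npair (edge_target d t) (mult_pair w (nfst (nsnd t))))"
  shows "\<forall>y\<in>set (list_decode (saturation_round d D2 R)). Inv y"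
proof -
  have "\<forall>y\<in>set (list_decode (foldl (\<lambda>acc t. extend_step d t acc) R ts)). Inv y"
    if "set ts \<subseteq> set (list_decode D2)" "\<forall>y\<in>set (list_decode R). Inv y" for ts R
    using that
  proof (induct ts arbitrary: R)
    case (Cons t ts)
    have "\<forall>y\<in>set (list_decode (extend_step d t R)). Inv y"
    proof (cases "lookup_code (edge_source d t) R \<noteq> 0 \<and> lookup_code (edge_target d t) R = 0")
      case True
      then obtain w where w: "lookup_code (edge_source d t) R = Suc w"
        by (cases "lookup_code (edge_source d t) R") auto
      then obtain y where "y \<in> set (list_decode R)" "nfst y = edge_source d t" "nsnd y = w"
        using lookup_code_SucD by blast
      moreover have "npair (nfst y) (nsnd y) = y" by simp
      ultimately have "Inv (npair (edge_source d t) w)" using Cons.prems(2) by metis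
      then have "Inv (npair (edge_target d t) (mult_pair w (nfst (nsnd t))))"
        using assms(2) Cons.prems(1) by simp
      then show ?thesis using True w Cons.prems(2) unfolding extend_step_def by simp
    next
      case False
      then show ?thesis using Cons.prems(2) unfolding extend_step_def by auto
    qed
    then show ?case using Cons by simp
  qed simp
  then show ?thesis using assms(1) unfolding saturation_round_def by blast
qed

lemma saturate_funpow: "saturate d D2 R0 N = (saturation_round d D2 ^^ N) R0"
  unfolding saturate_def by (rule rec_nat_funpow)

lemma saturate_invariant:
  assumes "\<forall>y\<in>set (list_decode R0). Inv y"
    and "\<And>t w. t \<in> set (list_decode D2) \<Longrightarrow> Inv (npair (edge_source d t) w)
           \<Longrightarrow> Inv (npair (edge_target d t) (mult_pair w (nfst (nsnd t))))"
  shows "\<forall>y\<in>set (list_decode (saturate d D2 R0 N)). Inv y"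
  unfolding saturate_funpow
proof (induct N)
  case (Suc N)
  have "\<forall>y\<in>set (list_decode (saturation_round d D2 ((saturation_round d D2 ^^ N) R0))). Inv y"
    by (rule saturation_round_invariant) (use Suc assms(2) in auto)
  then show ?case by simp
qed (simp add: assms(1))

lemma lookup_saturate:
  "lookup_code k R0 \<noteq> 0 \<Longrightarrow> lookup_code k (saturate d D2 R0 N) = lookup_code k R0"
  unfolding saturate_funpow by (induct N) (simp_all add: lookup_saturation_round)

lemma saturate_fixpoint:
  assumes K: "finite K" "keys_code R0 \<subseteq> K" "edge_target d ` set (list_decode D2) \<subseteq> K"
    and N: "card K < N"
  shows "saturation_round d D2 (saturate d D2 R0 N) = saturate d D2 R0 N"
proof (rule ccontr)
  define R where "R k = (saturation_round d D2 ^^ k) R0" for k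
  assume "saturation_round d D2 (saturate d D2 R0 N) \<noteq> saturate d D2 R0 N"
  then have not_fixN: "saturation_round d D2 (R N) \<noteq> R N" unfolding R_def saturate_funpow .
  have keys_K: "keys_code (R k) \<subseteq> K" for k
  proof (induct k)
    case 0 then show ?case using K by (simp add: R_def)
  next
    case (Suc k)
    have "R (Suc k) = saturation_round d D2 (R k)" by (simp add: R_def)
    then show ?case using keys_saturation_round_subset[of d D2 "R k"] Suc K(3) by auto
  qed
  have stays: "saturation_round d D2 (R k) = R k \<Longrightarrow> R (k + j) = R k" for k j
    by (induct j) (auto simp: R_def)
  have not_fix: "saturation_round d D2 (R k) \<noteq> R k" if "k \<le> N" for k
  proof
    assume fixed: "saturation_round d D2 (R k) = R k"
    then have "R N = R k" using stays[of k "N - k"] that by simp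
    then show False using not_fixN fixed by simp
  qed
  have "k \<le> card (keys_code (R k))" if "k \<le> N" for k
    using that
  proof (induct k)
    case 0 then show ?case by simp
  next
    case (Suc k)
    have "keys_code (R k) \<subset> keys_code (saturation_round d D2 (R k))"
      using keys_saturation_round_psubset not_fix Suc.prems by simp
    then have "card (keys_code (R k)) < card (keys_code (R (Suc k)))"
      by (simp add: R_def psubset_card_mono keys_code_def)
    then show ?case using Suc by simp
  qed
  then have "N \<le> card (keys_code (R N))" by simp
  also have "\<dots> \<le> card K" using keys_K K(1) card_mono by blast
  finally show False using N by simp
qed

end

section \<open>Correctness of the algorithm\<close>

definition transition_graph :: "('q \<times> 'l \<times> 'q) set \<Rightarrow> ('q \<times> 'q) set" where
  "transition_graph \<Delta> = {(p, q). \<exists>l. (p, l, q) \<in> \<Delta>}"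

lemma gen_trans_imp_rtrancl:
  "(p, x, q) \<in> gen_trans \<Delta> mult one \<Longrightarrow> (p, q) \<in> (transition_graph \<Delta>)\<^sup>*"
  by (induct rule: gen_trans.induct) (auto simp: transition_graph_def intro: rtrancl_into_rtrancl)

lemma rtrancl_imp_gen_trans:
  "(p, q) \<in> (transition_graph \<Delta>)\<^sup>* \<Longrightarrow> \<exists>x. (p, x, q) \<in> gen_trans \<Delta> mult one"
  by (induct rule: rtrancl_induct) (auto simp: transition_graph_def intro: gen_trans.intros)

lemma A2_star_label_in_carrier:
  assumes "monoid_on M f e" "\<Delta>2 \<subseteq> (Q \<times> Q) \<times> (M \<times> M) \<times> (Q \<times> Q)" "(p, x, q) \<in> A2_star f e \<Delta>2"
  shows "x \<in> M \<times> M"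
  using assms(3) unfolding A2_star_def
  by (induct rule: gen_trans.induct) (use assms(1,2) in \<open>auto simp: monoid_on_def\<close>)

lemma enc_trans2_components [simp]:
  "nfst (enc_trans2 (p, mn, q)) = prod_encode p"
  "nfst (nsnd (enc_trans2 (p, mn, q))) = prod_encode mn"
  "nsnd (nsnd (enc_trans2 (p, mn, q))) = prod_encode q"
  by (simp_all add: enc_trans2_def)

lemma set_list_decode_enc_set: "finite S \<Longrightarrow> set (list_decode (enc_set S)) = S"
  by (simp add: enc_set_def)

lemma mult_self_le_triangle: "c * c \<le> triangle (c + c)"
  by (induct c) auto

lemma card_le_enc_set: "finite S \<Longrightarrow> card S \<le> enc_set S"
  using length_list_decode_le[of "enc_set S"] by (simp add: enc_set_def)

locale valuation_algorithm_correct = valuation_algorithm +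
  fixes M :: "nat set" and f :: "nat \<Rightarrow> nat \<Rightarrow> nat" and \<eta> :: "nat \<times> nat \<Rightarrow> nat \<times> nat"
  assumes monoid: "monoid_on M f e"
    and mult_code: "\<And>a b. a \<in> M \<Longrightarrow> b \<in> M \<Longrightarrow> mult_code (npair a b) = f a b"
    and equalizable_code:
      "\<And>a b. a \<in> M \<Longrightarrow> b \<in> M \<Longrightarrow> equalizable_code (npair a b) = (if equalizable M f a b then 1 else 0)"
    and mge_code: "\<And>a b. a \<in> M \<Longrightarrow> b \<in> M \<Longrightarrow> mge_code (npair a b) = prod_encode (\<eta> (a, b))"

locale valuation_instance = valuation_algorithm_correct +
  fixes Sig Q I F :: "nat set" and \<Delta> :: "(nat \<times> (nat option \<times> nat) \<times> nat) set"
    and \<Delta>2 :: "((nat \<times> nat) \<times> (nat \<times> nat) \<times> (nat \<times> nat)) set"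
  assumes transducer: "transducer M Sig Q I F \<Delta>"
    and squared: "squared_output_automaton M f e Sig Q I F \<Delta> \<Delta>2"
begin

abbreviation "code \<equiv> input_code Sig Q I F \<Delta> \<Delta>2"
abbreviation "Rf \<equiv> forward_table code"
abbreviation "Rb \<equiv> backward_table code"
abbreviation "A2 \<equiv> A2_star f e \<Delta>2"

lemma finite_states: "finite Q" "finite I" "finite F" "I \<subseteq> Q" "F \<subseteq> Q"
  using transducer finite_subset unfolding transducer_def by blast+

lemma squared_trans: "finite \<Delta>2" "\<Delta>2 \<subseteq> (Q \<times> Q) \<times> (M \<times> M) \<times> (Q \<times> Q)"
  using squared unfolding squared_output_automaton_def by blast+

lemma input_fields:
  "states_code code = enc_set Q" "initial_code code = enc_set I" "final_code code = enc_set F"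
  "set (list_decode (squared_trans_code code)) = enc_trans2 ` \<Delta>2"
  using squared_trans(1) unfolding input_code_def states_code_def initial_code_def final_code_def
    squared_trans_code_def
  by (simp_all add: set_list_decode_enc_set del: list_encode.simps)

lemma label_in_carrier: "(p, x, q) \<in> A2 \<Longrightarrow> x \<in> M \<times> M"
  using A2_star_label_in_carrier[OF monoid squared_trans(2)] .

lemma card_pairs_less_round_bound: "card (prod_encode ` (Q \<times> Q)) < round_bound code"
proof -
  have "card Q \<le> code"
  proof -
    have "enc_set Q \<in> set (list_decode code)" by (simp add: input_code_def)
    then show ?thesis
      using card_le_enc_set[OF finite_states(1)] list_decode_less[of "enc_set Q" code] by simp
  qed
  have "card (prod_encode ` (Q \<times> Q)) = card Q * card Q"
    by (simp add: card_image inj_on_def card_cartesian_product)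
  also have "\<dots> \<le> code * code" using \<open>card Q \<le> code\<close> by (simp add: mult_le_mono)
  also have "\<dots> \<le> triangle (code + code)" by (rule mult_self_le_triangle)
  also have "\<dots> < round_bound code" by (simp add: round_bound_def prod_encode_def)
  finally show ?thesis .
qed

lemma saturation_fixpoint:
  assumes "V \<subseteq> Q" "finite V"
  shows "saturation_round d (squared_trans_code code) (saturate d (squared_trans_code code)
      (square_table (enc_set V) v) (round_bound code))
    = saturate d (squared_trans_code code) (square_table (enc_set V) v) (round_bound code)"
proof (rule saturate_fixpoint[OF _ _ _ card_pairs_less_round_bound])
  show "keys_code (square_table (enc_set V) v) \<subseteq> prod_encode ` (Q \<times> Q)"
    using assms by (auto simp: keys_code_def set_square_table set_list_decode_enc_set)
  show "edge_target d ` set (list_decode (squared_trans_code code)) \<subseteq> prod_encode ` (Q \<times> Q)"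
    using squared_trans(2) by (auto simp: input_fields edge_target_def)
qed (simp add: finite_states)

lemma forward_table_fixpoint: "saturation_round 0 (squared_trans_code code) Rf = Rf"
  unfolding forward_table_def input_fields using saturation_fixpoint finite_states by blast

lemma backward_table_fixpoint: "saturation_round 1 (squared_trans_code code) Rb = Rb"
  unfolding backward_table_def input_fields using saturation_fixpoint finite_states by blast

end

context valuation_instance
begin

lemma forward_table_entries:
  "\<forall>y\<in>set (list_decode Rf). \<exists>i\<in>I \<times> I. (i, prod_decode (nsnd y), prod_decode (nfst y)) \<in> A2"
  unfolding forward_table_def input_fields
proof (rule saturate_invariant)
  show "\<forall>y\<in>set (list_decode (square_table (enc_set I) (npair e e))).
      \<exists>i\<in>I \<times> I. (i, prod_decode (nsnd y), prod_decode (nfst y)) \<in> A2"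
    using gen_trans.refl finite_states(2)
    by (fastforce simp: set_square_table set_list_decode_enc_set A2_star_def)
next
  fix t w
  assume t: "t \<in> set (list_decode (squared_trans_code code))"
    and "\<exists>i\<in>I \<times> I. (i, prod_decode (nsnd (npair (edge_source 0 t) w)),
                      prod_decode (nfst (npair (edge_source 0 t) w))) \<in> A2"
  then obtain p m n q i where pq: "(p, (m, n), q) \<in> \<Delta>2" and t_eq: "t = enc_trans2 (p, (m, n), q)"
    and i: "i \<in> I \<times> I" and path: "(i, prod_decode w, p) \<in> A2"
    unfolding input_fields by (auto simp: edge_source_def)
  obtain w1 w2 where w: "prod_decode w = (w1, w2)" by (cases "prod_decode w")
  have "w1 \<in> M" "w2 \<in> M" using label_in_carrier[OF path] w by auto
  moreover have "m \<in> M" "n \<in> M" using pq squared_trans(2) by auto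
  ultimately have "mult_pair w (nfst (nsnd t)) = npair (f w1 m) (f w2 n)"
    unfolding mult_pair_def t_eq using w by (simp add: mult_code)
  moreover have "(i, (f w1 m, f w2 n), q) \<in> A2"
    using gen_trans.step[OF path[unfolded A2_star_def w] pq] unfolding A2_star_def by simp
  ultimately show "\<exists>i\<in>I \<times> I. (i, prod_decode (nsnd (npair (edge_target 0 t) (mult_pair w (nfst (nsnd t))))),
      prod_decode (nfst (npair (edge_target 0 t) (mult_pair w (nfst (nsnd t)))))) \<in> A2"
    using i by (auto simp: t_eq edge_target_def)
qed

lemma backward_table_entries:
  "\<forall>y\<in>set (list_decode Rb). \<exists>g\<in>F \<times> F. (prod_decode (nfst y), g) \<in> (transition_graph \<Delta>2)\<^sup>*"
  unfolding backward_table_def input_fields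
proof (rule saturate_invariant)
  show "\<forall>y\<in>set (list_decode (square_table (enc_set F) 0)).
      \<exists>g\<in>F \<times> F. (prod_decode (nfst y), g) \<in> (transition_graph \<Delta>2)\<^sup>*"
    using finite_states(3) by (fastforce simp: set_square_table set_list_decode_enc_set)
next
  fix t w
  assume t: "t \<in> set (list_decode (squared_trans_code code))"
    and "\<exists>g\<in>F \<times> F. (prod_decode (nfst (npair (edge_source 1 t) w)), g) \<in> (transition_graph \<Delta>2)\<^sup>*"
  then obtain p l q g where pq: "(p, l, q) \<in> \<Delta>2" and t_eq: "t = enc_trans2 (p, l, q)"
    and g: "g \<in> F \<times> F" "(q, g) \<in> (transition_graph \<Delta>2)\<^sup>*"
    unfolding input_fields by (auto simp: edge_source_def)
  have "(p, q) \<in> transition_graph \<Delta>2" using pq unfolding transition_graph_def by blast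
  then have "(p, g) \<in> (transition_graph \<Delta>2)\<^sup>*" using g(2) by (rule converse_rtrancl_into_rtrancl)
  then show "\<exists>g\<in>F \<times> F. (prod_decode (nfst (npair (edge_target 1 t) (mult_pair w (nfst (nsnd t))))), g)
      \<in> (transition_graph \<Delta>2)\<^sup>*"
    using g(1) by (auto simp: t_eq edge_target_def)
qed

lemma forward_table_initial: "i \<in> I \<times> I \<Longrightarrow> lookup_code (prod_encode i) Rf = Suc (npair e e)"
proof -
  let ?R0 = "square_table (enc_set I) (npair e e)"
  assume "i \<in> I \<times> I"
  then have "prod_encode i \<in> keys_code ?R0"
    using finite_states(2) by (force simp: keys_code_def set_square_table set_list_decode_enc_set)
  then obtain w where w: "lookup_code (prod_encode i) ?R0 = Suc w"
    using lookup_code_eq_0_iff not0_implies_Suc by blast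
  then have "w = npair e e"
    using lookup_code_SucD[OF w] by (auto simp: set_square_table)
  then show ?thesis using w lookup_saturate unfolding forward_table_def input_fields by simp
qed

lemma backward_table_final: "g \<in> F \<times> F \<Longrightarrow> lookup_code (prod_encode g) Rb \<noteq> 0"
proof -
  let ?R0 = "square_table (enc_set F) 0"
  assume "g \<in> F \<times> F"
  then have "prod_encode g \<in> keys_code ?R0"
    using finite_states(3) by (force simp: keys_code_def set_square_table set_list_decode_enc_set)
  then have "lookup_code (prod_encode g) ?R0 \<noteq> 0" by (simp add: lookup_code_eq_0_iff)
  then show ?thesis using lookup_saturate unfolding backward_table_def input_fields by simp
qed

lemma forward_table_reachable:
  assumes "(i, q) \<in> (transition_graph \<Delta>2)\<^sup>*" "i \<in> I \<times> I"
  shows "lookup_code (prod_encode q) Rf \<noteq> 0"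
  using assms(1)
proof (induct rule: rtrancl_induct)
  case base then show ?case using forward_table_initial[OF assms(2)] by simp
next
  case (step q q')
  then obtain l where "(q, l, q') \<in> \<Delta>2" by (auto simp: transition_graph_def)
  then show ?case
    using saturation_round_fixpoint_closed[OF forward_table_fixpoint, of "enc_trans2 (q, l, q')"] step(3)
    by (auto simp: input_fields edge_source_def edge_target_def)
qed

lemma backward_table_coreachable:
  assumes "(q, g) \<in> (transition_graph \<Delta>2)\<^sup>*" "g \<in> F \<times> F"
  shows "lookup_code (prod_encode q) Rb \<noteq> 0"
  using assms(1)
proof (induct rule: converse_rtrancl_induct)
  case base then show ?case using backward_table_final[OF assms(2)] by simp
next
  case (step q q')
  then obtain l where "(q, l, q') \<in> \<Delta>2" by (auto simp: transition_graph_def)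
  then show ?case
    using saturation_round_fixpoint_closed[OF backward_table_fixpoint, of "enc_trans2 (q, l, q')"] step(3)
    by (auto simp: input_fields edge_source_def edge_target_def)
qed

lemma forward_table_path:
  assumes "lookup_code (prod_encode q) Rf = Suc v"
  shows "\<exists>i\<in>I \<times> I. (i, prod_decode v, q) \<in> A2"
proof -
  obtain y where y: "y \<in> set (list_decode Rf)" "nfst y = prod_encode q" "nsnd y = v"
    using lookup_code_SucD[OF assms] by blast
  then have "\<exists>i\<in>I \<times> I. (i, prod_decode (nsnd y), prod_decode (nfst y)) \<in> A2"
    using forward_table_entries by blast
  then show ?thesis using y(2,3) by simp
qed

lemma backward_table_path:
  assumes "lookup_code (prod_encode q) Rb \<noteq> 0"
  shows "\<exists>g\<in>F \<times> F. \<exists>y. (q, y, g) \<in> A2"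
proof -
  have "prod_encode q \<in> keys_code Rb" using assms by (simp add: lookup_code_eq_0_iff)
  then obtain y where y: "prod_encode q = nfst y" "y \<in> set (list_decode Rb)"
    unfolding keys_code_def by (rule imageE)
  have "\<exists>g\<in>F \<times> F. (prod_decode (nfst y), g) \<in> (transition_graph \<Delta>2)\<^sup>*"
    using backward_table_entries y(2) by blast
  then obtain g where g: "g \<in> F \<times> F" "(q, g) \<in> (transition_graph \<Delta>2)\<^sup>*"
    unfolding y(1)[symmetric] prod_encode_inverse by blast
  have "\<exists>x. (q, x, g) \<in> A2"
    unfolding A2_star_def by (rule rtrancl_imp_gen_trans[OF g(2)])
  then show ?thesis using g(1) by blast
qed

end

context valuation_instance
begin

definition rho :: "nat \<times> nat \<Rightarrow> (nat \<times> nat) option" where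
  "rho q = (if q \<in> Q \<times> Q then (case rho_code Rf Rb (prod_encode q) of 0 \<Rightarrow> None | Suc v \<Rightarrow> Some (prod_decode v))
     else None)"

definition nu :: "nat \<times> nat \<Rightarrow> (nat \<times> nat) option" where
  "nu q = (case rho q of None \<Rightarrow> None
     | Some (a, b) \<Rightarrow> if a = b then Some (e, e) else if equalizable M f a b then Some (\<eta> (a, b)) else None)"

lemma has_relevant_pair_iff:
  "(\<exists>mp. relevant_pair f e I F \<Delta>2 q mp) \<longleftrightarrow> rho_code Rf Rb (prod_encode q) \<noteq> 0"
proof
  assume "\<exists>mp. relevant_pair f e I F \<Delta>2 q mp"
  then obtain i g x y where "i \<in> I \<times> I" "g \<in> F \<times> F" "(i, x, q) \<in> A2" "(q, y, g) \<in> A2"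
    unfolding relevant_pair_def by blast
  then show "rho_code Rf Rb (prod_encode q) \<noteq> 0"
    using forward_table_reachable backward_table_coreachable gen_trans_imp_rtrancl
    unfolding rho_code_def A2_star_def by metis
next
  assume "rho_code Rf Rb (prod_encode q) \<noteq> 0"
  then obtain v where "lookup_code (prod_encode q) Rf = Suc v" "lookup_code (prod_encode q) Rb \<noteq> 0"
    unfolding rho_code_def by (metis not0_implies_Suc)
  then show "\<exists>mp. relevant_pair f e I F \<Delta>2 q mp"
    using forward_table_path backward_table_path unfolding relevant_pair_def by blast
qed

lemma rho_SomeD:
  assumes "rho q = Some r"
  shows "(if q \<in> I \<times> I then r = (e, e) else relevant_pair f e I F \<Delta>2 q r) \<and> r \<in> M \<times> M"
proof -
  obtain v where v: "lookup_code (prod_encode q) Rf = Suc v" "lookup_code (prod_encode q) Rb \<noteq> 0"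
    and r: "r = prod_decode v"
    using assms unfolding rho_def rho_code_def by (auto split: if_splits nat.splits)
  obtain i where i: "i \<in> I \<times> I" and path: "(i, r, q) \<in> A2" using forward_table_path[OF v(1)] r by blast
  have "r \<in> M \<times> M" using label_in_carrier[OF path] .
  moreover have "r = (e, e)" if "q \<in> I \<times> I"
    using forward_table_initial[OF that] v(1) r by simp
  moreover have "relevant_pair f e I F \<Delta>2 q r"
    using backward_table_path[OF v(2)] i path unfolding relevant_pair_def by blast
  ultimately show ?thesis by simp
qed

lemma valuation_rho_nu: "valuation M f e \<eta> Q I F \<Delta>2 rho nu"
  unfolding valuation_def
proof (intro ballI conjI allI impI)
  fix q assume "q \<in> Q \<times> Q"
  then show "(rho q \<noteq> None) = (\<exists>mp. relevant_pair f e I F \<Delta>2 q mp)"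
    using has_relevant_pair_iff[of q] by (simp add: rho_def split: nat.split)
next
  fix q r assume "rho q = Some r"
  then show "if q \<in> I \<times> I then r = (e, e) else relevant_pair f e I F \<Delta>2 q r"
    using rho_SomeD by blast
qed (simp add: nu_def)

lemma enc_opt_rho: "q \<in> Q \<times> Q \<Longrightarrow> enc_opt (map_option prod_encode (rho q)) = rho_code Rf Rb (prod_encode q)"
  by (cases "rho_code Rf Rb (prod_encode q)") (auto simp: rho_def enc_opt_def)

lemma enc_opt_nu:
  assumes "q \<in> Q \<times> Q"
  shows "enc_opt (map_option prod_encode (nu q)) = nu_code (rho_code Rf Rb (prod_encode q))"
proof (cases "rho_code Rf Rb (prod_encode q)")
  case 0 then show ?thesis using assms by (simp add: nu_def rho_def nu_code_def enc_opt_def)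
next
  case (Suc v)
  obtain a b where ab: "prod_decode v = (a, b)" by (cases "prod_decode v")
  have rho_q: "rho q = Some (a, b)" using Suc assms ab by (simp add: rho_def)
  then have "a \<in> M" "b \<in> M" using rho_SomeD by blast+
  moreover have "v = npair a b" using ab prod_decode_inverse[of v] by simp
  ultimately show ?thesis using rho_q Suc
    by (simp add: nu_def nu_code_def enc_opt_def equalizable_code mge_code)
qed

lemma valuation_program_output: "valuation_program code = output_code Q rho nu"
proof -
  let ?entry = "\<lambda>q. npair (prod_encode q)
    (npair (enc_opt (map_option prod_encode (rho q))) (enc_opt (map_option prod_encode (nu q))))"
  have "table_entry Rf Rb (npair a b) = ?entry (a, b)" if "a \<in> Q" "b \<in> Q" for a b
    using that by (simp add: table_entry_def enc_opt_rho enc_opt_nu)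
  then have entries: "set (list_decode (table_list (enc_set Q) Rf Rb)) = ?entry ` (Q \<times> Q)"
    unfolding table_list_def set_foldl_foldl_cons_code set_list_decode_enc_set[OF finite_states(1)]
    by force
  have "valuation_program code = list_encode (list_decode (sort_code (table_list (enc_set Q) Rf Rb)))"
    by (simp add: valuation_program_def input_fields)
  also have "\<dots> = enc_set (?entry ` (Q \<times> Q))"
    by (simp only: list_decode_sort_code entries) (simp add: enc_set_def)
  finally show ?thesis unfolding output_code_def .
qed

end

theorem (in valuation_algorithm_correct) valuation_program_correct:
  assumes "transducer M Sig Q I F \<Delta>" "squared_output_automaton M f e Sig Q I F \<Delta> \<Delta>2"
  shows "\<exists>\<rho> \<nu>. valuation M f e \<eta> Q I F \<Delta>2 \<rho> \<nu>
    \<and> valuation_program (input_code Sig Q I F \<Delta> \<Delta>2) = output_code Q \<rho> \<nu>"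
proof -
  interpret valuation_instance mult_code equalizable_code mge_code e M f \<eta> Sig Q I F \<Delta> \<Delta>2
    using assms by unfold_locales
  show ?thesis using valuation_rho_nu valuation_program_output by blast
qed

lemma computable_compose_computes_on:
  assumes "computes_on r D g" "computable s" "\<And>x. s x \<in> D"
  shows "computable (\<lambda>x. g (s x))"
proof -
  obtain rs where rs: "\<And>x. eval_recf rs [x] (s x)"
    using assms(2) unfolding computable_def computes_on_def by blast
  have "eval_recf r [s x] (g (s x))" for x using assms(1,3) unfolding computes_on_def by blast
  then show ?thesis by (intro computableI[where r="RComp r [rs]"] eval_Comp1[OF rs])
qed

text \<open>The effectiveness assumptions only specify the programs for \<open>f\<close>, equalizability and
  \<open>\<eta>\<close> on codes of pairs in \<open>M\<close>; since \<open>M\<close> is decidable, their inputs can first be mapped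
  into \<open>pairs_code M\<close>, yielding total computable functions that agree with them there.\<close>

lemma computable_on_pairs_code:
  assumes "decidable (\<lambda>x. x \<in> M)" "e \<in> M" "computes_on r (pairs_code M) g"
  shows "\<exists>h. computable h \<and> (\<forall>a\<in>M. \<forall>b\<in>M. h (npair a b) = g (npair a b))"
proof -
  define s where "s z = (if nfst z \<in> M \<and> nsnd z \<in> M then z else npair e e)" for z
  have in_M: "decidable (\<lambda>z. G z \<in> M)" if "computable G" for G
    using assms(1) that unfolding decidable_def by (rule computable_comp)
  have "computable s"
    unfolding s_def by (intro computable_if decidable_conj in_M computable_intros)
  moreover have "s z \<in> pairs_code M" for z
  proof (cases "nfst z \<in> M \<and> nsnd z \<in> M")
    case True
    then have "prod_decode z \<in> M \<times> M" by (cases "prod_decode z") auto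
    then have "prod_encode (prod_decode z) \<in> pairs_code M" unfolding pairs_code_def by (rule imageI)
    then show ?thesis using True by (simp add: s_def)
  qed (use assms(2) in \<open>auto simp: s_def pairs_code_def\<close>)
  ultimately have "computable (\<lambda>z. g (s z))" by (rule computable_compose_computes_on[OF assms(3)])
  then show ?thesis by (intro exI[of _ "\<lambda>z. g (s z)"]) (simp add: s_def)
qed

lemma effective_mge_monoid_codes:
  assumes "effective_mge_monoid M f e \<eta>"
  obtains mult_code equalizable_code mge_code where
    "computable_valuation_algorithm mult_code equalizable_code mge_code"
    "valuation_algorithm_correct mult_code equalizable_code mge_code e M f \<eta>"
proof -
  obtain rM rf rq re where
    mge: "mge_monoid M f e" and
    "computes_on rM UNIV (\<lambda>x. if x \<in> M then 1 else 0)" and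
    rf: "computes_on rf (pairs_code M) (\<lambda>x. f (nfst x) (nsnd x))" and
    rq: "computes_on rq (pairs_code M) (\<lambda>x. if equalizable M f (nfst x) (nsnd x) then 1 else 0)" and
    re: "computes_on re (pairs_code M) (\<lambda>x. prod_encode (\<eta> (prod_decode x)))"
    using assms unfolding effective_mge_monoid_def by blast
  then have dec: "decidable (\<lambda>x. x \<in> M)" unfolding decidable_def computable_def by blast
  have monoid: "monoid_on M f e" using mge by (simp add: mge_monoid_def)
  then have "e \<in> M" by (simp add: monoid_on_def)
  obtain mc where "computable mc" "\<forall>a\<in>M. \<forall>b\<in>M. mc (npair a b) = f a b"
    using computable_on_pairs_code[OF dec \<open>e \<in> M\<close> rf] by auto
  moreover obtain ec where "computable ec"
    "\<forall>a\<in>M. \<forall>b\<in>M. ec (npair a b) = (if equalizable M f a b then 1 else 0)"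
    using computable_on_pairs_code[OF dec \<open>e \<in> M\<close> rq] by auto
  moreover obtain gc where "computable gc" "\<forall>a\<in>M. \<forall>b\<in>M. gc (npair a b) = prod_encode (\<eta> (a, b))"
    using computable_on_pairs_code[OF dec \<open>e \<in> M\<close> re] by auto
  ultimately show ?thesis
    using monoid by (intro that[of mc ec gc]; unfold_locales) auto
qed

theorem proposition3:
  fixes M :: "nat set" and f :: "nat \<Rightarrow> nat \<Rightarrow> nat" and e :: nat
    and \<eta> :: "nat \<times> nat \<Rightarrow> nat \<times> nat"
  assumes "effective_mge_monoid M f e \<eta>"
  shows "\<exists>r. \<forall>Sig Q I F \<Delta> \<Delta>2.
           transducer M Sig Q I F \<Delta> \<and> squared_output_automaton M f e Sig Q I F \<Delta> \<Delta>2 \<longrightarrow>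
           (\<exists>\<rho> \<nu>. valuation M f e \<eta> Q I F \<Delta>2 \<rho> \<nu>
                  \<and> eval_recf r [input_code Sig Q I F \<Delta> \<Delta>2] (output_code Q \<rho> \<nu>))"
proof -
  obtain mult_code equalizable_code mge_code where
    "computable_valuation_algorithm mult_code equalizable_code mge_code"
    "valuation_algorithm_correct mult_code equalizable_code mge_code e M f \<eta>"
    using effective_mge_monoid_codes[OF assms] .
  then interpret computable_valuation_algorithm mult_code equalizable_code mge_code e
      + valuation_algorithm_correct mult_code equalizable_code mge_code e M f \<eta>
    by simp_all
  obtain r where "\<And>c. eval_recf r [c] (valuation_program c)"
    using computable_valuation_program unfolding computable_def computes_on_def by blast
  then show ?thesis using valuation_program_correct by metis
qed

end
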